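(* Let $s,t\ge 1$, let $k=s+t+4\le n$, and let $Q(s,t)$ be the unicyclic graph on $k$ vertices consisting of a $4$-cycle $v_1v_2v_3v_4v_1$, $s$ further vertices each adjacent only to $v_1$, and $t$ further vertices each adjacent only to $v_2$. Regard $Q(s,t)$ as a subgraph of $K_n$ and let $\Gamma=(K_n,Q(s,t)^-)$. Then, with $u=n-k$, $$\varphi(\Gamma,\lambda)=(\lambda+1)^{n-7}\Big(\lambda^7+(7-n)\lambda^6+(21-6n)\lambda^5+(12k-15n+4ku+8st-13)\lambda^4+(48k-20n+16ku+32st-157)\lambda^3+(113n-56k-8ku-16st(u-1)-267)\lambda^2+(250n-208k-48ku-32st(u+1)-185)\lambda+127n-116k-28ku+24st(2u-1)-47\Big).$$
   Context: A signed graph is a pair $(G,\sigma)$ with $\sigma:E(G)\to\{+,-\}$; its adjacency matrix has $(i,j)$-entry $\sigma(v_iv_j)$ if $v_iv_j\in E(G)$ and $0$ otherwise. For a subgraph $H$ of $K_n$, $(K_n,H^-)$ denotes the signed complete graph on $n$ vertices whose negative edges are exactly the edges of $H$ and all other edges are positive. $\varphi(\Gamma,\lambda)=\det(\lambda I-A(\Gamma))$. *)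

theory Defs
  imports "Jordan_Normal_Form.Char_Poly"
begin

text \<open>Vertices of K_n are 0,...,n-1.  The unicyclic graph Q(s,t) is placed on the
  vertices 0,...,s+t+3: the 4-cycle v1 v2 v3 v4 v1 is 0-1-2-3-0, the s pendant
  vertices attached to v1 = 0 are 4,...,s+3, and the t pendant vertices attached
  to v2 = 1 are s+4,...,s+t+3.\<close>

definition Q_edge :: "nat \<Rightarrow> nat \<Rightarrow> nat \<Rightarrow> nat \<Rightarrow> bool" where
  "Q_edge s t i j \<longleftrightarrow>
     {i, j} \<in> {{0, 1}, {1, 2}, {2, 3}, {3, 0}}
     \<or> (\<exists>a. 4 \<le> a \<and> a < s + 4 \<and> {i, j} = {0, a})
     \<or> (\<exists>b. s + 4 \<le> b \<and> b < s + t + 4 \<and> {i, j} = {1, b})"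

definition signed_complete_adj :: "nat \<Rightarrow> (nat \<Rightarrow> nat \<Rightarrow> bool) \<Rightarrow> int mat" where
  "signed_complete_adj n E =
     mat n n (\<lambda>(i, j). if i = j then 0 else if E i j then -1 else 1)"

end

theory Submission
  imports Defs
begin

text \<open>Write \<open>\<lambda>I - A = (\<lambda> + 1) I + B\<close>: the matrix \<open>B\<close> has entry \<open>+1\<close> on the edges of
  \<open>Q(s,t)\<close> and \<open>-1\<close> everywhere else, the diagonal included, so it only depends on which of
  seven classes its row and column vertices lie in (\<open>v\<^sub>1,\<dots>,v\<^sub>4\<close>, the two pendant
  classes, and the \<open>u\<close> vertices outside \<open>Q(s,t)\<close>).  Factoring \<open>B = X Y\<close> through the
  \<open>n \<times> 7\<close> class indicator matrix \<open>X\<close>, Sylvester's identity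
  \<open>det (c I\<^sub>n + X Y) c\<^sup>7 = c\<^sup>n det (c I\<^sub>7 + Y X)\<close> reduces the characteristic
  polynomial to the determinant of a \<open>7 \<times> 7\<close> quotient matrix, which is expanded
  symbolically.\<close>

lemma det_smult_one_add_mult_swap:
  fixes X Y :: "'a::idom mat" and c :: 'a
  assumes X: "X \<in> carrier_mat n p" and Y: "Y \<in> carrier_mat p n"
  shows "det (c \<cdot>\<^sub>m 1\<^sub>m n + X * Y) * c ^ p = c ^ n * det (c \<cdot>\<^sub>m 1\<^sub>m p + Y * X)"
proof -
  define W where "W = four_block_mat (1\<^sub>m n) (- X) Y (c \<cdot>\<^sub>m 1\<^sub>m p)"
  have W: "W \<in> carrier_mat (n + p) (n + p)"
    unfolding W_def using X Y by auto
  have delta: "a * (if P then b else 0) = (if P then a * b else 0)"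
    "(if P then b else 0) * a = (if P then b * a else 0)" for a b :: 'a and P
    by simp_all
  have upper: "four_block_mat (c \<cdot>\<^sub>m 1\<^sub>m n) X (0\<^sub>m p n) (1\<^sub>m p) * W
      = four_block_mat (c \<cdot>\<^sub>m 1\<^sub>m n + X * Y) (0\<^sub>m n p) Y (c \<cdot>\<^sub>m 1\<^sub>m p)"
    unfolding W_def using X Y
    by (subst mult_four_block_mat[of _ n n _ p _ p _ _ n _ p])
      (auto intro!: eq_matI simp: scalar_prod_def delta mult.assoc[symmetric])
  have lower: "four_block_mat (1\<^sub>m n) (0\<^sub>m n p) (- Y) (1\<^sub>m p) * W
      = four_block_mat (1\<^sub>m n) (- X) (0\<^sub>m p n) (c \<cdot>\<^sub>m 1\<^sub>m p + Y * X)"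
    unfolding W_def using X Y
    by (subst mult_four_block_mat[of _ n n _ p _ p _ _ n _ p])
      (auto intro!: eq_matI simp: scalar_prod_def delta mult.assoc[symmetric] sum_negf)
  have "det (c \<cdot>\<^sub>m 1\<^sub>m n + X * Y) * c ^ p = c ^ n * det W"
    using det_mult[of "four_block_mat (c \<cdot>\<^sub>m 1\<^sub>m n) X (0\<^sub>m p n) (1\<^sub>m p)" "n + p" W] X Y W
    unfolding upper
    by (simp add: det_four_block_mat_lower_left_zero[of _ n _ p]
        det_four_block_mat_upper_right_zero[of _ n _ p])
  also have "det W = det (c \<cdot>\<^sub>m 1\<^sub>m p + Y * X)"
    using det_mult[of "four_block_mat (1\<^sub>m n) (0\<^sub>m n p) (- Y) (1\<^sub>m p)" "n + p" W] X Y W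
    unfolding lower
    by (simp add: det_four_block_mat_lower_left_zero[of _ n _ p]
        det_four_block_mat_upper_right_zero[of _ n _ p])
  finally show ?thesis .
qed

lemma det_smult_one_add_blowup:
  fixes g :: "nat \<Rightarrow> nat \<Rightarrow> 'a::idom"
  assumes f: "\<And>i. i < n \<Longrightarrow> f i < m"
  shows "det (c \<cdot>\<^sub>m 1\<^sub>m n + mat n n (\<lambda>(i, j). g (f i) (f j))) * c ^ m
    = c ^ n * det (c \<cdot>\<^sub>m 1\<^sub>m m + mat m m (\<lambda>(a, b). g a b * of_nat (card {j. j < n \<and> f j = b})))"
proof -
  define X :: "'a mat" where "X = mat n m (\<lambda>(i, a). of_bool (f i = a))"
  define Y where "Y = mat m n (\<lambda>(a, j). g a (f j))"
  have "X * Y = mat n n (\<lambda>(i, j). g (f i) (f j))"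
    unfolding X_def Y_def using f by (intro eq_matI) (auto simp: scalar_prod_def)
  moreover have "Y * X = mat m m (\<lambda>(a, b). g a b * of_nat (card {j. j < n \<and> f j = b}))"
    unfolding X_def Y_def
    by (intro eq_matI) (auto simp: scalar_prod_def Int_def atLeast0LessThan mult.commute)
  moreover have "X \<in> carrier_mat n m" "Y \<in> carrier_mat m n"
    unfolding X_def Y_def by auto
  ultimately show ?thesis using det_smult_one_add_mult_swap by metis
qed

text \<open>Hiding each Laplace term behind a constant with a congruence rule that only rewrites the
  coefficient lets the simplifier discard a minor whose coefficient is zero before expanding it.\<close>

definition laplace_summand :: "'a::comm_ring_1 \<Rightarrow> nat \<Rightarrow> 'a \<Rightarrow> 'a" where
  "laplace_summand a j D = a * ((-1) ^ j * D)"

lemma laplace_summand_cong: "a = b \<Longrightarrow> laplace_summand a j D = laplace_summand b j D"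
  by simp

lemma laplace_summand_0: "laplace_summand 0 j D = 0"
  by (simp add: laplace_summand_def)

lemma det_mat_Suc_laplace_first_row:
  "det (mat (Suc m) (Suc m) f) = (\<Sum>j<Suc m. laplace_summand (f (0, j)) j
      (det (mat m m (\<lambda>(i, k). f (Suc i, if k < j then k else Suc k)))))"
proof -
  have "det (mat (Suc m) (Suc m) f)
      = (\<Sum>j<Suc m. mat (Suc m) (Suc m) f $$ (0, j) * cofactor (mat (Suc m) (Suc m) f) 0 j)"
    by (rule laplace_expansion_row) auto
  also have "\<dots> = (\<Sum>j<Suc m. laplace_summand (f (0, j)) j
      (det (mat m m (\<lambda>(i, k). f (Suc i, if k < j then k else Suc k)))))"
  proof (rule sum.cong[OF refl])
    fix j assume "j \<in> {..<Suc m}"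
    then have "mat_delete (mat (Suc m) (Suc m) f) 0 j
        = mat m m (\<lambda>(i, k). f (Suc i, if k < j then k else Suc k))"
      unfolding mat_delete_def by (intro eq_matI) auto
    with \<open>j \<in> {..<Suc m}\<close> show "mat (Suc m) (Suc m) f $$ (0, j) * cofactor (mat (Suc m) (Suc m) f) 0 j
        = laplace_summand (f (0, j)) j (det (mat m m (\<lambda>(i, k). f (Suc i, if k < j then k else Suc k))))"
      unfolding cofactor_def laplace_summand_def by simp
  qed
  finally show ?thesis .
qed

definition delete_nth :: "nat \<Rightarrow> 'a list \<Rightarrow> 'a list" where
  "delete_nth j xs = take j xs @ drop (Suc j) xs"

lemma length_delete_nth: "j < length xs \<Longrightarrow> length (delete_nth j xs) = length xs - 1"
  unfolding delete_nth_def by auto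

lemma nth_delete_nth:
  "j < length xs \<Longrightarrow> k < length xs - 1 \<Longrightarrow> delete_nth j xs ! k = xs ! (if k < j then k else Suc k)"
  unfolding delete_nth_def by (auto simp: nth_append min_def)

fun det_rows :: "'a::comm_ring_1 list list \<Rightarrow> 'a" where
  "det_rows [] = 1"
| "det_rows (r # rs) =
    sum_list (map (\<lambda>j. laplace_summand (r ! j) j (det_rows (map (delete_nth j) rs))) [0..<length r])"

lemma det_mat_of_rows_list:
  "length rs = n \<Longrightarrow> \<forall>r \<in> set rs. length r = n \<Longrightarrow> det (mat_of_rows_list n rs) = det_rows rs"
proof (induction n arbitrary: rs)
  case 0
  then show ?case by (simp add: mat_of_rows_list_def)
next
  case (Suc m)
  then obtain r rs' where rs: "rs = r # rs'" and "length rs' = m" and "length r = Suc m"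
    by (cases rs) auto
  have minor: "mat m m (\<lambda>(i, k). rs' ! i ! (if k < j then k else Suc k))
      = mat_of_rows_list m (map (delete_nth j) rs')" if "j < Suc m" for j
    using Suc.prems that \<open>length rs' = m\<close> unfolding rs mat_of_rows_list_def
    by (intro eq_matI) (auto simp: nth_delete_nth)
  have "det (mat_of_rows_list (Suc m) rs) = det (mat (Suc m) (Suc m) (\<lambda>(i, j). rs ! i ! j))"
    using Suc.prems by (simp add: mat_of_rows_list_def)
  also have "\<dots> = (\<Sum>j<Suc m. laplace_summand (r ! j) j
      (det (mat_of_rows_list m (map (delete_nth j) rs'))))"
    unfolding det_mat_Suc_laplace_first_row by (intro sum.cong refl) (simp add: minor rs)
  also have "\<dots> = (\<Sum>j<Suc m. laplace_summand (r ! j) j (det_rows (map (delete_nth j) rs')))"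
    using Suc.prems \<open>length rs' = m\<close> unfolding rs
    by (intro sum.cong refl arg_cong[where f = "laplace_summand _ _"] Suc.IH) (auto simp: length_delete_nth)
  also have "\<dots> = det_rows rs"
    using \<open>length r = Suc m\<close> unfolding rs
    by (simp add: sum_list_distinct_conv_sum_set atLeast0LessThan del: upt_Suc)
  finally show ?case .
qed

definition Q_class :: "nat \<Rightarrow> nat \<Rightarrow> nat \<Rightarrow> nat" where
  "Q_class s t i = (if i < 4 then i else if i < s + 4 then 4 else if i < s + t + 4 then 5 else 6)"

lemma of_nat_card_Q_class:
  assumes "n = s + t + 4 + u" and "b < 7"
  shows "of_nat (card {i. i < n \<and> Q_class s t i = b}) = [1, 1, 1, 1, of_nat s, of_nat t, of_nat u] ! b"
proof -
  have "{i. i < n \<and> Q_class s t i = b} =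
      (if b < 4 then {b} else if b = 4 then {4..<s + 4} else if b = 5 then {s + 4..<s + t + 4} else {s + t + 4..<n})"
    using assms by (auto simp: Q_class_def)
  moreover have "b = 0 \<or> b = 1 \<or> b = 2 \<or> b = 3 \<or> b = 4 \<or> b = 5 \<or> b = 6"
    using \<open>b < 7\<close> by arith
  ultimately show ?thesis using assms(1) by (elim disjE) simp_all
qed

definition Q_quotient_edge :: "nat \<Rightarrow> nat \<Rightarrow> bool" where
  "Q_quotient_edge a b \<longleftrightarrow> {a, b} \<in> {{0, 1}, {1, 2}, {2, 3}, {3, 0}, {0, 4}, {1, 5}}"

lemma Q_edge_iff_quotient_edge: "Q_edge s t i j \<longleftrightarrow> Q_quotient_edge (Q_class s t i) (Q_class s t j)"
  by (cases "i < 4"; cases "i < s + 4"; cases "i < s + t + 4";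
      cases "j < 4"; cases "j < s + 4"; cases "j < s + t + 4")
    (auto simp: Q_edge_def Q_quotient_edge_def Q_class_def doubleton_eq_iff)

lemma not_Q_quotient_edge_refl: "\<not> Q_quotient_edge a a"
  by (auto simp: Q_quotient_edge_def doubleton_eq_iff)

lemma char_poly_matrix_signed_complete_Q:
  "char_poly_matrix (signed_complete_adj n (Q_edge s t))
    = [:1, 1:] \<cdot>\<^sub>m 1\<^sub>m n
      + mat n n (\<lambda>(i, j). if Q_quotient_edge (Q_class s t i) (Q_class s t j) then 1 else -1)"
  by (rule eq_matI)
    (auto simp: char_poly_matrix_def signed_complete_adj_def Q_edge_iff_quotient_edge
      not_Q_quotient_edge_refl one_pCons)

lemma det_Q_quotient:
  fixes x S T U :: "'a::comm_ring_1"
  shows "det ((x + 1) \<cdot>\<^sub>m 1\<^sub>m 7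
      + mat 7 7 (\<lambda>(a, b). (if Q_quotient_edge a b then 1 else -1) * [1, 1, 1, 1, S, T, U] ! b))
    = (let k = S + T + 4; u = U; N = S + T + U + 4 in
       x^7 + (7 - N) * x^6 + (21 - 6*N) * x^5 + (12*k - 15*N + 4*k*u + 8*S*T - 13) * x^4
       + (48*k - 20*N + 16*k*u + 32*S*T - 157) * x^3
       + (113*N - 56*k - 8*k*u - 16*S*T*(u - 1) - 267) * x^2
       + (250*N - 208*k - 48*k*u - 32*S*T*(u + 1) - 185) * x
       + (127*N - 116*k - 28*k*u + 24*S*T*(2*u - 1) - 47))"
    (is "det ?M = ?rhs")
proof -
  \<comment> \<open>Subtracting the last row from all others makes the matrix sparse enough to expand.\<close>
  define L :: "'a mat" where "L = mat 7 7 (\<lambda>(a, b). if a = b then 1 else if b = 6 then -1 else 0)"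
  let ?c = "x + 1"
  have "det L = 1"
  proof -
    have "det L = prod_list (diag_mat L)"
      by (rule det_upper_triangular) (auto simp: L_def upper_triangular_def)
    then show ?thesis by (simp add: L_def diag_mat_def upt_rec)
  qed
  define rows where "rows =
      [[?c, 2, 0, 2, 2 * S, 0, - ?c], [2, ?c, 2, 0, 0, 2 * T, - ?c], [0, 2, ?c, 2, 0, 0, - ?c],
       [2, 0, 2, ?c, 0, 0, - ?c], [2, 0, 0, 0, ?c, 0, - ?c], [0, 2, 0, 0, 0, ?c, - ?c],
       [-1, -1, -1, -1, - S, - T, ?c - U]]"
  have "L * ?M = mat_of_rows_list 7 rows"
  proof (rule eq_matI)
    fix i j assume "i < dim_row (mat_of_rows_list 7 rows)" and "j < dim_col (mat_of_rows_list 7 rows)"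
    then have "i = 0 \<or> i = 1 \<or> i = 2 \<or> i = 3 \<or> i = 4 \<or> i = 5 \<or> i = 6"
      and "j = 0 \<or> j = 1 \<or> j = 2 \<or> j = 3 \<or> j = 4 \<or> j = 5 \<or> j = 6"
      by (auto simp: mat_of_rows_list_def rows_def)
    then show "(L * ?M) $$ (i, j) = mat_of_rows_list 7 rows $$ (i, j)"
      by (elim disjE) (simp_all add: L_def mat_of_rows_list_def rows_def scalar_prod_def
        Q_quotient_edge_def doubleton_eq_iff atLeast0_lessThan_Suc eval_nat_numeral algebra_simps)
  qed (auto simp: L_def mat_of_rows_list_def rows_def)
  have "det ?M = det (L * ?M)"
    using det_mult[of L 7 ?M] \<open>det L = 1\<close> by (simp add: L_def)
  also have "\<dots> = det_rows rows"
    unfolding \<open>L * ?M = mat_of_rows_list 7 rows\<close> by (rule det_mat_of_rows_list) (auto simp: rows_def)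
  also have "\<dots> = ?rhs"
    unfolding rows_def
    by (simp add: upt_rec laplace_summand_0 delete_nth_def cong: laplace_summand_cong;
        (simp only: laplace_summand_def)?)+
      (simp add: Let_def algebra_simps eval_nat_numeral)
  finally show ?thesis .
qed

theorem lemma3p3:
  fixes s t n :: nat
  assumes "s \<ge> 1" and "t \<ge> 1" and "s + t + 4 \<le> n"
  shows "let k = int (s + t + 4); u = int n - k; N = int n; S = int s; T = int t;
             P = [: 127*N - 116*k - 28*k*u + 24*S*T*(2*u - 1) - 47,
                    250*N - 208*k - 48*k*u - 32*S*T*(u + 1) - 185,
                    113*N - 56*k - 8*k*u - 16*S*T*(u - 1) - 267,
                    48*k - 20*N + 16*k*u + 32*S*T - 157,
                    12*k - 15*N + 4*k*u + 8*S*T - 13,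
                    21 - 6*N,
                    7 - N,
                    1 :]
         in char_poly (signed_complete_adj n (Q_edge s t)) * [:1, 1:] ^ 7
              = [:1, 1:] ^ n * P"
proof -
  obtain u where n: "n = s + t + 4 + u"
    using assms(3) le_Suc_ex by blast
  let ?c = "[:1, 1:] :: int poly"
  let ?g = "\<lambda>a b. if Q_quotient_edge a b then 1 else -1 :: int poly"
  have "char_poly (signed_complete_adj n (Q_edge s t)) * ?c ^ 7
      = ?c ^ n * det (?c \<cdot>\<^sub>m 1\<^sub>m 7
          + mat 7 7 (\<lambda>(a, b). ?g a b * of_nat (card {i. i < n \<and> Q_class s t i = b})))"
    unfolding char_poly_def char_poly_matrix_signed_complete_Q
    by (rule det_smult_one_add_blowup) (simp add: Q_class_def)
  also have "mat 7 7 (\<lambda>(a, b). ?g a b * of_nat (card {i. i < n \<and> Q_class s t i = b}))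
      = mat 7 7 (\<lambda>(a, b). ?g a b * [1, 1, 1, 1, of_nat s, of_nat t, of_nat u] ! b)"
    using n by (intro cong_mat) (auto simp: of_nat_card_Q_class)
  finally have reduction: "char_poly (signed_complete_adj n (Q_edge s t)) * ?c ^ 7
      = ?c ^ n * det (?c \<cdot>\<^sub>m 1\<^sub>m 7
          + mat 7 7 (\<lambda>(a, b). ?g a b * [1, 1, 1, 1, of_nat s, of_nat t, of_nat u] ! b))" .
  have c: "?c = [:0, 1:] + 1"
    by (simp add: one_pCons)
  show ?thesis
    unfolding Let_def reduction
    unfolding c det_Q_quotient Let_def
    by (intro arg_cong[where f = "(*) _"] poly_ext) (simp add: n eval_nat_numeral algebra_simps)
qed

end
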